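(* Let $a>0$. For any finite $\Lambda\subset\mathbb Z^2$ and any $i\in\Lambda$, $$\mu^0_\Lambda(|h_i|\le a)\ge\frac{a}{4\langle|h_i|\rangle^0_\Lambda}\wedge\frac12.$$
   Context: Fix an integer $r\ge1$. For each $k\in\mathbb Z^2$ let $\Psi_k:\mathbb R\to\mathbb R$ satisfy: $\Psi_k\equiv0$ if $\|k\|_1>r$; $\Psi_k=\Psi_{-k}$ and $\Psi_k(x)=\Psi_k(-x)$; $\Psi_k$ is $C^2$; $\Psi_k''\ge0$, and there is $c>0$ such that the translation-invariant random walk on $\mathbb Z^2$ with jump rates $P_c(0,j)=1$ if $\Psi_j''(h)\ge c$ for all $h$ and $0$ otherwise is irreducible. For finite $\Lambda\subset\mathbb Z^2$ and $b\in\mathbb R$, $$\mu^b_\Lambda(d\underline h)=\frac1{Z^b_\Lambda}\exp\Big\{-\sum_{\langle ij\rangle\cap\Lambda\neq\emptyset}\Psi_{j-i}(h_i-h_j)\Big\}\prod_{i\in\Lambda}dh_i\prod_{i\notin\Lambda}\delta_b(dh_i),$$ the sum being over pairs of distinct sites with $\|j-i\|_\infty\le r$ meeting $\Lambda$; $\langle\cdot\rangle^b_\Lambda$ denotes expectation; $x\wedge y=\min(x,y)$. *)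

theory Defs
  imports "HOL-Analysis.Analysis"
begin

type_synonym site = "int \<times> int"

definition site_diff :: "site \<Rightarrow> site \<Rightarrow> site" where
  "site_diff j i = (fst j - fst i, snd j - snd i)"

definition site_neg :: "site \<Rightarrow> site" where
  "site_neg k = (- fst k, - snd k)"

definition norm1 :: "site \<Rightarrow> int" where
  "norm1 k = \<bar>fst k\<bar> + \<bar>snd k\<bar>"

definition norminf :: "site \<Rightarrow> int" where
  "norminf k = max \<bar>fst k\<bar> \<bar>snd k\<bar>"

definition admissible_potential :: "nat \<Rightarrow> (site \<Rightarrow> real \<Rightarrow> real) \<Rightarrow> bool" where
  "admissible_potential r \<Psi> \<longleftrightarrow>
     (\<forall>k x. norm1 k > int r \<longrightarrow> \<Psi> k x = 0) \<and>
     (\<forall>k. \<Psi> k = \<Psi> (site_neg k)) \<and>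
     (\<forall>k x. \<Psi> k x = \<Psi> k (- x)) \<and>
     (\<forall>k x. \<Psi> k differentiable at x) \<and>
     (\<forall>k x. deriv (\<Psi> k) differentiable at x) \<and>
     (\<forall>k. continuous_on UNIV (deriv (deriv (\<Psi> k)))) \<and>
     (\<forall>k x. deriv (deriv (\<Psi> k)) x \<ge> 0) \<and>
     (\<exists>c>0. \<forall>x y. (x, y) \<in> {(u, v). \<forall>h. deriv (deriv (\<Psi> (site_diff v u))) h \<ge> c}\<^sup>*)"

definition ext_conf :: "site set \<Rightarrow> real \<Rightarrow> (site \<Rightarrow> real) \<Rightarrow> site \<Rightarrow> real" where
  "ext_conf \<Lambda> b h i = (if i \<in> \<Lambda> then h i else b)"

text \<open>Pairs \<open>\<langle>ij\<rangle>\<close> of distinct sites within sup-distance r meeting \<open>\<Lambda>\<close>; the sum over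
  unordered pairs is written as one half of the sum over ordered pairs (the summand is
  symmetric by the standing assumptions).\<close>
definition pairs :: "nat \<Rightarrow> site set \<Rightarrow> (site \<times> site) set" where
  "pairs r \<Lambda> = {(i, j). i \<noteq> j \<and> norminf (site_diff j i) \<le> int r \<and> (i \<in> \<Lambda> \<or> j \<in> \<Lambda>)}"

definition hamiltonian :: "nat \<Rightarrow> (site \<Rightarrow> real \<Rightarrow> real) \<Rightarrow> site set \<Rightarrow> real \<Rightarrow> (site \<Rightarrow> real) \<Rightarrow> real" where
  "hamiltonian r \<Psi> \<Lambda> b h =
     (1/2) * (\<Sum>(i, j) \<in> pairs r \<Lambda>. \<Psi> (site_diff j i) (ext_conf \<Lambda> b h i - ext_conf \<Lambda> b h j))"

definition ref_measure :: "site set \<Rightarrow> (site \<Rightarrow> real) measure" where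
  "ref_measure \<Lambda> = PiM \<Lambda> (\<lambda>_. lborel)"

definition partition_fn :: "nat \<Rightarrow> (site \<Rightarrow> real \<Rightarrow> real) \<Rightarrow> site set \<Rightarrow> real \<Rightarrow> real" where
  "partition_fn r \<Psi> \<Lambda> b = (\<integral>h. exp (- hamiltonian r \<Psi> \<Lambda> b h) \<partial>ref_measure \<Lambda>)"

definition gibbs :: "nat \<Rightarrow> (site \<Rightarrow> real \<Rightarrow> real) \<Rightarrow> site set \<Rightarrow> real \<Rightarrow> (site \<Rightarrow> real) measure" where
  "gibbs r \<Psi> \<Lambda> b = density (ref_measure \<Lambda>)
     (\<lambda>h. ennreal (exp (- hamiltonian r \<Psi> \<Lambda> b h) / partition_fn r \<Psi> \<Lambda> b))"

end

theory Submission
  imports Defs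
begin

text \<open>The density \<open>exp (- H)\<close> of the Gibbs measure with zero boundary condition is
  log-concave, because \<open>H\<close> is convex, and even, because every \<open>\<Psi>\<^sub>k\<close> is. By Prekopa's theorem,
  obtained from the one-dimensional Prekopa--Leindler inequality by integrating out one
  coordinate at a time, the marginal density \<open>g\<close> of \<open>h\<^sub>i\<close> is again log-concave and even, hence
  nonincreasing in \<open>|s|\<close>. Markov's inequality puts half of the mass of such a density in
  \<open>[-t, t]\<close> for \<open>t = 2\<langle>|h\<^sub>i|\<rangle>\<close>; if \<open>a < t\<close>, unimodality gives \<open>[-a, a]\<close> at least the
  fraction \<open>a / t\<close> of it, that is at least \<open>a / (4\<langle>|h\<^sub>i|\<rangle>)\<close>.\<close>

section \<open>Prekopa--Leindler on the real line\<close>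

lemma nn_integral_layer_cake:
  fixes f :: "real \<Rightarrow> real"
  assumes [measurable]: "f \<in> borel_measurable borel" and nonneg: "\<And>x. 0 \<le> f x"
  shows "(\<integral>\<^sup>+x. ennreal (f x) \<partial>lborel) =
         (\<integral>\<^sup>+t. indicator {0<..} t * emeasure lborel {x. t < f x} \<partial>lborel)"
proof -
  have m: "(\<lambda>(x, t). indicator {0<..} t * indicator {x. t < f x} x :: ennreal)
      \<in> borel_measurable (lborel \<Otimes>\<^sub>M lborel)"
    by (simp add: indicator_def case_prod_beta')
  have "(\<integral>\<^sup>+x. ennreal (f x) \<partial>lborel) =
        (\<integral>\<^sup>+x. (\<integral>\<^sup>+t. indicator {0<..} t * indicator {x. t < f x} x \<partial>lborel) \<partial>lborel)"
  proof (rule nn_integral_cong)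
    fix x
    have "(\<integral>\<^sup>+t. indicator {0<..} t * indicator {x. t < f x} x \<partial>lborel)
        = (\<integral>\<^sup>+t. indicator {0<..<f x} t \<partial>lborel)"
      by (rule nn_integral_cong) (auto simp: indicator_def)
    then show "ennreal (f x) = (\<integral>\<^sup>+t. indicator {0<..} t * indicator {x. t < f x} x \<partial>lborel)"
      using nonneg[of x] by simp
  qed
  also have "\<dots> = (\<integral>\<^sup>+t. (\<integral>\<^sup>+x. indicator {0<..} t * indicator {x. t < f x} x \<partial>lborel) \<partial>lborel)"
    using lborel_pair.Fubini'[OF m] by simp
  also have "\<dots> = (\<integral>\<^sup>+t. indicator {0<..} t * emeasure lborel {x. t < f x} \<partial>lborel)"
    by (intro nn_integral_cong, subst nn_integral_cmult) auto
  finally show ?thesis .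
qed

lemma borel_measurable_emeasure_superlevel:
  fixes f :: "real \<Rightarrow> real"
  assumes [measurable]: "f \<in> borel_measurable borel"
  shows "(\<lambda>t. emeasure lborel {x. t < f x}) \<in> borel_measurable borel"
proof -
  have "emeasure lborel {x. t < f x} = (\<integral>\<^sup>+x. indicator {x. t < f x} x \<partial>lborel)" for t
    by (subst nn_integral_indicator) auto
  moreover have "(\<lambda>t. \<integral>\<^sup>+x. indicator {x. t < f x} x \<partial>lborel) \<in> borel_measurable borel"
    by (simp add: indicator_def)
  ultimately show ?thesis by simp
qed

lemma convex_real_combination_Inf_Sup_mem:
  fixes A :: "real set"
  assumes "A \<noteq> {}" "bounded A" "convex A" "0 < s" "s < 1"
  shows "(1 - s) * Inf A + s * Sup A \<in> A"
proof -
  let ?p = "(1 - s) * Inf A + s * Sup A"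
  have bdd: "bdd_above A" "bdd_below A"
    using assms(2) by (simp_all add: bounded_imp_bdd_above bounded_imp_bdd_below)
  have between: "Inf A \<le> x" "x \<le> Sup A" if "x \<in> A" for x
    using that bdd by (simp_all add: cInf_lower cSup_upper)
  show ?thesis
  proof (cases "Inf A < Sup A")
    case True
    have "0 < s * (Sup A - Inf A)" "s * (Sup A - Inf A) < Sup A - Inf A"
      using True assms(4,5) by simp_all
    then have "Inf A < ?p" "?p < Sup A" by (simp_all add: algebra_simps)
    then obtain a b where "a \<in> A" "a < ?p" "b \<in> A" "?p < b"
      using cInf_lessD[OF assms(1)] less_cSupD[OF assms(1)] by metis
    then show ?thesis
      using assms(3) unfolding is_interval_convex_1[symmetric] is_interval_1 by (meson less_le)
  next
    case False
    obtain x where "x \<in> A" using assms(1) by blast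
    with False between have "x = Inf A" "Inf A = Sup A" by force+
    with \<open>x \<in> A\<close> show ?thesis by (simp add: algebra_simps)
  qed
qed

lemma emeasure_lborel_le_Sup_minus_Inf:
  fixes A :: "real set"
  assumes "A \<noteq> {}" "bounded A"
  shows "emeasure lborel A \<le> ennreal (Sup A - Inf A)"
proof -
  have bdd: "bdd_above A" "bdd_below A"
    using assms(2) by (simp_all add: bounded_imp_bdd_above bounded_imp_bdd_below)
  then have "A \<subseteq> {Inf A..Sup A}" by (auto intro: cInf_lower cSup_upper)
  then have "emeasure lborel A \<le> emeasure lborel {Inf A..Sup A}" by (rule emeasure_mono) simp
  moreover have "Inf A \<le> Sup A" using assms(1) bdd by (rule cInf_le_cSup)
  ultimately show ?thesis by simp
qed

text \<open>If \<open>A\<close> and \<open>B\<close> are intervals with endpoints \<open>\<alpha> \<le> \<alpha>'\<close> and \<open>\<beta> \<le> \<beta>'\<close>, then \<open>C\<close>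
  contains the open interval between \<open>l \<alpha> + (1 - l) \<beta>\<close> and \<open>l \<alpha>' + (1 - l) \<beta>'\<close>.\<close>
lemma brunn_minkowski_convex_real:
  fixes A B C :: "real set" and l :: real
  assumes A: "A \<noteq> {}" "bounded A" "convex A" and B: "B \<noteq> {}" "bounded B" "convex B"
    and l: "0 < l" "l < 1"
    and C: "\<And>a b. a \<in> A \<Longrightarrow> b \<in> B \<Longrightarrow> l * a + (1 - l) * b \<in> C" "C \<in> sets lborel"
  shows "ennreal l * emeasure lborel A + ennreal (1 - l) * emeasure lborel B \<le> emeasure lborel C"
proof -
  define L where "L = l * Inf A + (1 - l) * Inf B"
  define D where "D = l * (Sup A - Inf A) + (1 - l) * (Sup B - Inf B)"
  have le: "Inf A \<le> Sup A" "Inf B \<le> Sup B"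
    using A B by (simp_all add: cInf_le_cSup bounded_imp_bdd_above bounded_imp_bdd_below)
  then have D: "0 \<le> D" using l by (simp add: D_def)
  have sub: "{L<..<L + D} \<subseteq> C"
  proof
    fix p assume p: "p \<in> {L<..<L + D}"
    define s where "s = (p - L) / D"
    have s: "0 < s" "s < 1" and "p = L + s * D"
      using p by (auto simp: s_def field_simps)
    then have "p = l * ((1 - s) * Inf A + s * Sup A) + (1 - l) * ((1 - s) * Inf B + s * Sup B)"
      by (simp add: L_def D_def algebra_simps)
    then show "p \<in> C"
      using C(1) convex_real_combination_Inf_Sup_mem[OF A s] convex_real_combination_Inf_Sup_mem[OF B s]
      by simp
  qed
  have "ennreal l * emeasure lborel A + ennreal (1 - l) * emeasure lborel B
      \<le> ennreal l * ennreal (Sup A - Inf A) + ennreal (1 - l) * ennreal (Sup B - Inf B)"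
    using A B by (intro add_mono mult_left_mono emeasure_lborel_le_Sup_minus_Inf) auto
  also have "\<dots> = ennreal D"
    using l le by (simp add: D_def ennreal_mult[symmetric] ennreal_plus[symmetric] del: ennreal_plus)
  also have "\<dots> = emeasure lborel {L<..<L + D}" using D by simp
  also have "\<dots> \<le> emeasure lborel C" using sub C(2) by (rule emeasure_mono)
  finally show ?thesis .
qed

lemma nn_integral_layer_cake_le_1:
  fixes f :: "real \<Rightarrow> real"
  assumes "f \<in> borel_measurable borel" "\<And>x. 0 \<le> f x" "\<And>x. f x \<le> 1"
  shows "(\<integral>\<^sup>+x. ennreal (f x) \<partial>lborel) =
         (\<integral>\<^sup>+t. indicator {0<..<1} t * emeasure lborel {x. t < f x} \<partial>lborel)"
  unfolding nn_integral_layer_cake[OF assms(1,2)]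
proof (rule nn_integral_cong)
  fix t :: real
  have "{x. t < f x} = {}" if "1 \<le> t" using that assms(3) by (smt (verit) Collect_empty_eq)
  then show "indicator {0<..} t * emeasure lborel {x. t < f x} =
        indicator {0<..<1} t * emeasure lborel {x. t < f x}"
    by (cases "t < 1") (auto simp: indicator_def)
qed

text \<open>By the layer-cake formula it suffices to compare the superlevel sets at each level
  \<open>t \<in> (0, 1)\<close>, which are nonempty bounded intervals.\<close>
lemma prekopa_leindler_additive:
  fixes f g h :: "real \<Rightarrow> real" and l n :: real
  assumes [measurable]: "f \<in> borel_measurable borel" "g \<in> borel_measurable borel"
      "h \<in> borel_measurable borel"
    and nonneg: "\<And>x. 0 \<le> f x" "\<And>x. 0 \<le> g x" "\<And>x. 0 \<le> h x"
    and le_1: "\<And>x. f x \<le> 1" "\<And>x. g x \<le> 1"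
    and approx_1: "\<And>t. t < 1 \<Longrightarrow> \<exists>x. t < f x" "\<And>t. t < 1 \<Longrightarrow> \<exists>x. t < g x"
    and support: "\<And>x. n < \<bar>x\<bar> \<Longrightarrow> f x = 0" "\<And>x. n < \<bar>x\<bar> \<Longrightarrow> g x = 0"
    and convex: "\<And>t. 0 < t \<Longrightarrow> convex {x. t < f x}" "\<And>t. 0 < t \<Longrightarrow> convex {x. t < g x}"
    and l: "0 < l" "l < 1"
    and hyp: "\<And>a b t. 0 < t \<Longrightarrow> t < f a \<Longrightarrow> t < g b \<Longrightarrow> t < h (l * a + (1 - l) * b)"
  shows "ennreal l * (\<integral>\<^sup>+x. f x \<partial>lborel) + ennreal (1 - l) * (\<integral>\<^sup>+x. g x \<partial>lborel)
         \<le> (\<integral>\<^sup>+x. h x \<partial>lborel)"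
proof -
  have [measurable]: "(\<lambda>t. emeasure lborel {x. t < f x}) \<in> borel_measurable borel"
    "(\<lambda>t. emeasure lborel {x. t < g x}) \<in> borel_measurable borel"
    by (simp_all add: borel_measurable_emeasure_superlevel)
  have bounded_superlevel: "bounded {x. t < k x}"
    if "0 < t" "\<And>x. n < \<bar>x\<bar> \<Longrightarrow> k x = 0" for t and k :: "real \<Rightarrow> real"
  proof (rule bounded_subset[OF bounded_closed_interval])
    show "{x. t < k x} \<subseteq> {-n..n}" using that by (smt (verit) atLeastAtMost_iff mem_Collect_eq subsetI)
  qed
  have level: "ennreal l * emeasure lborel {x. t < f x} + ennreal (1 - l) * emeasure lborel {x. t < g x}
      \<le> emeasure lborel {x. t < h x}" if "0 < t" "t < 1" for t
    using approx_1[OF that(2)] bounded_superlevel[OF that(1)] support convex[OF that(1)] l hyp[OF that(1)]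
    by (intro brunn_minkowski_convex_real) auto
  have "ennreal l * (\<integral>\<^sup>+x. f x \<partial>lborel) + ennreal (1 - l) * (\<integral>\<^sup>+x. g x \<partial>lborel)
     = ennreal l * (\<integral>\<^sup>+t. indicator {0<..<1} t * emeasure lborel {x. t < f x} \<partial>lborel)
       + ennreal (1 - l) * (\<integral>\<^sup>+t. indicator {0<..<1} t * emeasure lborel {x. t < g x} \<partial>lborel)"
    using nonneg le_1 by (simp add: nn_integral_layer_cake_le_1)
  also have "\<dots> = (\<integral>\<^sup>+t. indicator {0<..<1} t * (ennreal l * emeasure lborel {x. t < f x}
          + ennreal (1 - l) * emeasure lborel {x. t < g x}) \<partial>lborel)"
    by (simp add: nn_integral_add nn_integral_cmult algebra_simps flip: nn_integral_cmult)
  also have "\<dots> \<le> (\<integral>\<^sup>+t. indicator {0<..} t * emeasure lborel {x. t < h x} \<partial>lborel)"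
    by (intro nn_integral_mono) (auto simp: indicator_def level)
  also have "\<dots> = (\<integral>\<^sup>+x. h x \<partial>lborel)" using nn_integral_layer_cake[of h] nonneg by simp
  finally show ?thesis .
qed

lemma less_powr_combination:
  fixes t x y l :: real
  assumes "0 < t" "t < x" "t < y" "0 < l" "l < 1"
  shows "t < x powr l * y powr (1 - l)"
proof -
  have "t = t powr l * t powr (1 - l)" using assms by (simp add: powr_add[symmetric])
  also have "\<dots> < x powr l * y powr (1 - l)"
    using assms by (intro mult_strict_mono powr_less_mono2) auto
  finally show ?thesis .
qed

lemma nn_integral_bounded_support_le:
  fixes f :: "real \<Rightarrow> real"
  assumes "\<And>x. f x \<le> C" "\<And>x. n < \<bar>x\<bar> \<Longrightarrow> f x = 0"
  shows "(\<integral>\<^sup>+x. ennreal (f x) \<partial>lborel) \<le> ennreal C * emeasure lborel {-n..n}"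
proof -
  have "(\<integral>\<^sup>+x. ennreal (f x) \<partial>lborel) \<le> (\<integral>\<^sup>+x. ennreal C * indicator {-n..n} x \<partial>lborel)"
    using assms by (intro nn_integral_mono) (auto simp: indicator_def ennreal_leI abs_le_iff)
  also have "\<dots> = ennreal C * emeasure lborel {-n..n}" by (rule nn_integral_cmult_indicator) simp
  finally show ?thesis .
qed

lemma emeasure_lborel_Icc_times_less_top: "ennreal C * emeasure lborel {a..b::real} < top"
  by (simp add: ennreal_mult_less_top emeasure_lborel_Icc_eq)

lemma nn_integral_bounded_support_finite:
  fixes f :: "real \<Rightarrow> real"
  assumes "\<And>x. f x \<le> C" "\<And>x. n < \<bar>x\<bar> \<Longrightarrow> f x = 0"
  shows "(\<integral>\<^sup>+x. ennreal (f x) \<partial>lborel) = ennreal (enn2real (\<integral>\<^sup>+x. ennreal (f x) \<partial>lborel))"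
proof (rule ennreal_enn2real[symmetric])
  show "(\<integral>\<^sup>+x. ennreal (f x) \<partial>lborel) < top"
    using nn_integral_bounded_support_le[of f C n] assms emeasure_lborel_Icc_times_less_top[of C "-n" n]
    by simp
qed

lemma exists_gt_normalized_Sup:
  fixes f :: "'a \<Rightarrow> real"
  assumes "0 < Sup (range f)" "t < 1"
  shows "\<exists>x. t < f x / Sup (range f)"
proof -
  have "t * Sup (range f) < Sup (range f)" using assms by simp
  then obtain x where "t * Sup (range f) < f x" using less_cSupD[of "range f"] by blast
  then show ?thesis using assms(1) by (auto simp: pos_less_divide_eq)
qed

lemma nn_integral_divide_bounded_support:
  fixes k :: "real \<Rightarrow> real"
  assumes "k \<in> borel_measurable borel" "\<And>x. 0 \<le> k x" "\<And>x. k x \<le> C" "\<And>x. n < \<bar>x\<bar> \<Longrightarrow> k x = 0"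
    and "0 < c"
  shows "(\<integral>\<^sup>+x. ennreal (k x / c) \<partial>lborel) = ennreal (enn2real (\<integral>\<^sup>+x. ennreal (k x) \<partial>lborel) / c)"
proof -
  have "(\<integral>\<^sup>+x. ennreal (k x / c) \<partial>lborel) = (\<integral>\<^sup>+x. ennreal (k x) * ennreal (1 / c) \<partial>lborel)"
    using assms(5) by (intro nn_integral_cong) (simp add: ennreal_mult''[symmetric])
  also have "\<dots> = (\<integral>\<^sup>+x. ennreal (k x) \<partial>lborel) * ennreal (1 / c)"
    using assms(1) by (intro nn_integral_multc) simp
  also have "\<dots> = ennreal (enn2real (\<integral>\<^sup>+x. ennreal (k x) \<partial>lborel) / c)"
    using assms by (subst nn_integral_bounded_support_finite[of k C n]) (simp_all add: ennreal_mult''[symmetric])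
  finally show ?thesis .
qed

text \<open>The additive form applied to \<open>f / sup f\<close>, \<open>g / sup g\<close> and \<open>h / ((sup f) ^ l (sup g) ^ (1 - l))\<close>.\<close>
lemma prekopa_leindler_normalized:
  fixes f g h :: "real \<Rightarrow> real" and l n C :: real
  assumes [measurable]: "f \<in> borel_measurable borel" "g \<in> borel_measurable borel"
      "h \<in> borel_measurable borel"
    and nonneg: "\<And>x. 0 \<le> f x" "\<And>x. 0 \<le> g x" "\<And>x. 0 \<le> h x"
    and bounded: "\<And>x. f x \<le> C" "\<And>x. g x \<le> C" "\<And>x. h x \<le> C"
    and support: "\<And>x. n < \<bar>x\<bar> \<Longrightarrow> f x = 0" "\<And>x. n < \<bar>x\<bar> \<Longrightarrow> g x = 0"
      "\<And>x. n < \<bar>x\<bar> \<Longrightarrow> h x = 0"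
    and convex: "\<And>t. 0 < t \<Longrightarrow> convex {x. t < f x}" "\<And>t. 0 < t \<Longrightarrow> convex {x. t < g x}"
    and l: "0 < l" "l < 1"
    and hyp: "\<And>a b. f a powr l * g b powr (1 - l) \<le> h (l * a + (1 - l) * b)"
    and sup_pos: "0 < Sup (range f)" "0 < Sup (range g)"
  defines "I k \<equiv> enn2real (\<integral>\<^sup>+x. ennreal (k x) \<partial>lborel)"
  shows "l * (I f / Sup (range f)) + (1 - l) * (I g / Sup (range g))
         \<le> I h / (Sup (range f) powr l * Sup (range g) powr (1 - l))"
proof -
  define Mf Mg K where "Mf = Sup (range f)" and "Mg = Sup (range g)"
    and "K = Sup (range f) powr l * Sup (range g) powr (1 - l)"
  have K: "0 < K" using sup_pos by (simp add: K_def)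
  have le_sup: "f x \<le> Mf" "g x \<le> Mg" for x
    using bounded by (auto simp: Mf_def Mg_def intro!: cSup_upper bdd_aboveI[of _ C])
  have "ennreal l * (\<integral>\<^sup>+x. f x / Mf \<partial>lborel) + ennreal (1 - l) * (\<integral>\<^sup>+x. g x / Mg \<partial>lborel)
      \<le> (\<integral>\<^sup>+x. h x / K \<partial>lborel)"
  proof (rule prekopa_leindler_additive)
    show "f x / Mf \<le> 1" "g x / Mg \<le> 1" for x
      using le_sup sup_pos by (simp_all add: Mf_def Mg_def)
    show "\<exists>x. t < f x / Mf" "\<exists>x. t < g x / Mg" if "t < 1" for t
      using exists_gt_normalized_Sup sup_pos that by (simp_all add: Mf_def Mg_def)
    show "convex {x. t < f x / Mf}" "convex {x. t < g x / Mg}" if "0 < t" for t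
      using convex[of "t * Mf"] convex[of "t * Mg"] that sup_pos
      by (simp_all add: Mf_def Mg_def pos_less_divide_eq)
    show "t < h (l * a + (1 - l) * b) / K" if "0 < t" "t < f a / Mf" "t < g b / Mg" for a b t
    proof -
      have "t < (f a / Mf) powr l * (g b / Mg) powr (1 - l)"
        using that l by (intro less_powr_combination) auto
      also have "\<dots> = f a powr l * g b powr (1 - l) / K"
        using nonneg sup_pos by (simp add: Mf_def Mg_def K_def powr_divide)
      also have "\<dots> \<le> h (l * a + (1 - l) * b) / K" using hyp K by (simp add: divide_right_mono)
      finally show ?thesis .
    qed
  qed (use nonneg support l sup_pos K in \<open>auto simp: Mf_def Mg_def\<close>)
  moreover have "(\<integral>\<^sup>+x. f x / Mf \<partial>lborel) = ennreal (I f / Mf)" "(\<integral>\<^sup>+x. g x / Mg \<partial>lborel) = ennreal (I g / Mg)"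
    "(\<integral>\<^sup>+x. h x / K \<partial>lborel) = ennreal (I h / K)"
    unfolding I_def using nonneg bounded support sup_pos K
    by (intro nn_integral_divide_bounded_support[where C = C and n = n]; simp add: Mf_def Mg_def)+
  ultimately show ?thesis
    using sup_pos K l
    by (simp add: Mf_def Mg_def K_def I_def ennreal_mult[symmetric] ennreal_plus[symmetric] del: ennreal_plus)
qed

lemma prekopa_leindler:
  fixes f g h :: "real \<Rightarrow> real" and l n C :: real
  assumes "f \<in> borel_measurable borel" "g \<in> borel_measurable borel" "h \<in> borel_measurable borel"
    and nonneg: "\<And>x. 0 \<le> f x" "\<And>x. 0 \<le> g x" "\<And>x. 0 \<le> h x"
    and bounded: "\<And>x. f x \<le> C" "\<And>x. g x \<le> C" "\<And>x. h x \<le> C"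
    and "\<And>x. n < \<bar>x\<bar> \<Longrightarrow> f x = 0" "\<And>x. n < \<bar>x\<bar> \<Longrightarrow> g x = 0" "\<And>x. n < \<bar>x\<bar> \<Longrightarrow> h x = 0"
    and "\<And>t. 0 < t \<Longrightarrow> convex {x. t < f x}" "\<And>t. 0 < t \<Longrightarrow> convex {x. t < g x}"
    and l: "0 < l" "l < 1"
    and "\<And>a b. f a powr l * g b powr (1 - l) \<le> h (l * a + (1 - l) * b)"
  shows "enn2real (\<integral>\<^sup>+x. ennreal (f x) \<partial>lborel) powr l * enn2real (\<integral>\<^sup>+x. ennreal (g x) \<partial>lborel) powr (1 - l)
         \<le> enn2real (\<integral>\<^sup>+x. ennreal (h x) \<partial>lborel)"
proof -
  let ?I = "\<lambda>k. enn2real (\<integral>\<^sup>+x. ennreal (k x) \<partial>lborel)"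
  define Mf Mg K where "Mf = Sup (range f)" and "Mg = Sup (range g)" and "K = Mf powr l * Mg powr (1 - l)"
  have le_sup: "f x \<le> Mf" "g x \<le> Mg" for x
    using bounded by (auto simp: Mf_def Mg_def intro!: cSup_upper bdd_aboveI[of _ C])
  consider "Mf \<le> 0 \<or> Mg \<le> 0" | "0 < Mf" "0 < Mg" by linarith
  then show ?thesis
  proof cases
    case 1
    then have "f = (\<lambda>_. 0) \<or> g = (\<lambda>_. 0)" using le_sup nonneg by (meson antisym order.trans ext)
    then show ?thesis using l by auto
  next
    case 2
    then have K: "0 < K" by (simp add: K_def)
    have normalized: "l * (?I f / Mf) + (1 - l) * (?I g / Mg) \<le> ?I h / K"
      unfolding Mf_def Mg_def K_def using 2 assms
      by (intro prekopa_leindler_normalized[where n = n and C = C]) (simp_all add: Mf_def Mg_def)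
    show ?thesis
    proof (cases "?I f = 0 \<or> ?I g = 0")
      case False
      then have pos: "0 < ?I f / Mf" "0 < ?I g / Mg" using 2 by (simp_all add: less_le)
      have "?I f powr l * ?I g powr (1 - l) = K * ((?I f / Mf) powr l * (?I g / Mg) powr (1 - l))"
        using 2 K by (simp add: K_def powr_divide)
      also have "\<dots> \<le> K * (l * (?I f / Mf) + (1 - l) * (?I g / Mg))"
        using Youngs_inequality_0[of l "1 - l", OF _ _ _ pos] l K by (intro mult_left_mono) auto
      also have "\<dots> \<le> ?I h" using normalized K by (simp add: pos_le_divide_eq mult.commute)
      finally show ?thesis .
    qed (use l in auto)
  qed
qed

section \<open>Prekopa's theorem\<close>

definition log_concave :: "(('i \<Rightarrow> real) \<Rightarrow> real) \<Rightarrow> bool" where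
  "log_concave F \<longleftrightarrow> (\<forall>z. 0 \<le> F z) \<and>
     (\<forall>z w l. 0 < l \<and> l < 1 \<longrightarrow> F z powr l * F w powr (1 - l) \<le> F (\<lambda>k. l * z k + (1 - l) * w k))"

lemma log_concaveD:
  assumes "log_concave F"
  shows "0 \<le> F z"
    and "0 < l \<Longrightarrow> l < 1 \<Longrightarrow> F z powr l * F w powr (1 - l) \<le> F (\<lambda>k. l * z k + (1 - l) * w k)"
  using assms by (auto simp: log_concave_def)

lemma log_concave_fun_upd:
  assumes "log_concave F" "0 < l" "l < 1"
  shows "F (z(j := a)) powr l * F (w(j := b)) powr (1 - l)
         \<le> F ((\<lambda>k. l * z k + (1 - l) * w k)(j := l * a + (1 - l) * b))"
proof -
  have "(\<lambda>k. l * (z(j := a)) k + (1 - l) * (w(j := b)) k) = (\<lambda>k. l * z k + (1 - l) * w k)(j := l * a + (1 - l) * b)"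
    by auto
  then show ?thesis using log_concaveD(2)[OF assms, of "z(j := a)" "w(j := b)"] by simp
qed

lemma log_concave_superlevel_convex:
  assumes "log_concave F" "0 \<le> s"
  shows "convex {t. s < F (z(j := t))}"
  unfolding convex_alt
proof (intro ballI allI impI)
  fix a b u :: real
  assume a: "a \<in> {t. s < F (z(j := t))}" and b: "b \<in> {t. s < F (z(j := t))}" and u: "0 \<le> u \<and> u \<le> 1"
  show "(1 - u) *\<^sub>R a + u *\<^sub>R b \<in> {t. s < F (z(j := t))}"
  proof (cases "u = 0 \<or> u = 1")
    case False
    then have u: "0 < 1 - u" "1 - u < 1" using u by auto
    have "s < F (z(j := a)) powr (1 - u) * F (z(j := b)) powr (1 - (1 - u))"
    proof (cases "s = 0")
      case False
      then show ?thesis using a b assms(2) u by (intro less_powr_combination) auto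
    qed (use a b in simp)
    also have "\<dots> \<le> F (z(j := (1 - u) * a + u * b))"
      using log_concave_fun_upd[OF assms(1) u, of z j a z b] by (simp add: algebra_simps)
    finally show ?thesis by simp
  qed (use a b in auto)
qed

abbreviation lborel_fun :: "('i \<Rightarrow> real) measure" where
  "lborel_fun \<equiv> PiM UNIV (\<lambda>_. lborel)"

definition box_supported :: "real \<Rightarrow> 'i set \<Rightarrow> (('i \<Rightarrow> real) \<Rightarrow> real) \<Rightarrow> bool" where
  "box_supported n S F \<longleftrightarrow> F \<in> borel_measurable lborel_fun \<and> bdd_above (range F) \<and>
     (\<forall>z. (\<exists>k\<in>S. n < \<bar>z k\<bar>) \<longrightarrow> F z = 0)"

text \<open>Under \<open>box_supported\<close> the integral is finite, so \<open>enn2real\<close> loses nothing.\<close>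
definition integral_coord :: "'i \<Rightarrow> (('i \<Rightarrow> real) \<Rightarrow> real) \<Rightarrow> ('i \<Rightarrow> real) \<Rightarrow> real" where
  "integral_coord j F z = enn2real (\<integral>\<^sup>+t. ennreal (F (z(j := t))) \<partial>lborel)"

lemma measurable_fun_upd_lborel_fun [measurable]:
  "(\<lambda>p. (fst p)(j := snd p)) \<in> measurable (lborel_fun \<Otimes>\<^sub>M lborel) lborel_fun"
  by (rule measurable_fun_upd[where J = UNIV]) auto

lemma measurable_fun_upd_const [measurable]: "(\<lambda>t. z(j := t)) \<in> measurable lborel lborel_fun"
  by (rule measurable_fun_upd[where J = UNIV]) (auto simp: space_PiM)

lemma measurable_override_on [measurable]:
  "(\<lambda>y. override_on x y S) \<in> measurable (PiM S (\<lambda>_. lborel)) lborel_fun"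
proof -
  have "(\<lambda>y k. (\<lambda>k y. if k \<in> S then y k else x k) k y) \<in> measurable (PiM S (\<lambda>_. lborel)) lborel_fun"
  proof (rule measurable_PiM_single')
    fix k :: 'a
    show "(\<lambda>y. if k \<in> S then y k else x k) \<in> measurable (PiM S (\<lambda>_. lborel)) lborel"
      by (cases "k \<in> S") simp_all
  qed simp
  then show ?thesis by (simp add: override_on_def[abs_def])
qed

lemma box_supportedD:
  assumes "box_supported n S F"
  shows "F \<in> borel_measurable lborel_fun" and "\<exists>C. \<forall>z. F z \<le> C"
    and "k \<in> S \<Longrightarrow> n < \<bar>z k\<bar> \<Longrightarrow> F z = 0"
  using assms by (auto simp: box_supported_def bdd_above_def)

lemma nn_integral_eq_integral_coord:
  assumes "box_supported n S F" "j \<in> S"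
  shows "(\<integral>\<^sup>+t. ennreal (F (z(j := t))) \<partial>lborel) = ennreal (integral_coord j F z)"
proof -
  obtain C where "\<And>z. F z \<le> C" using box_supportedD(2)[OF assms(1)] by blast
  then show ?thesis unfolding integral_coord_def
    by (rule nn_integral_bounded_support_finite[where n = n]) (use box_supportedD(3)[OF assms] in simp)
qed

text \<open>The Prekopa--Leindler inequality on each line parallel to the \<open>j\<close>-th axis.\<close>
lemma log_concave_integral_coord:
  assumes "log_concave F" "box_supported n S F" "j \<in> S"
  shows "log_concave (integral_coord j F)"
  unfolding log_concave_def
proof (intro conjI allI impI)
  have [measurable]: "F \<in> borel_measurable lborel_fun" by (rule box_supportedD(1)[OF assms(2)])
  obtain C where C: "\<And>z. F z \<le> C" using box_supportedD(2)[OF assms(2)] by blast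
  fix z w :: "'a \<Rightarrow> real" and l :: real
  assume l: "0 < l \<and> l < 1"
  show "integral_coord j F z powr l * integral_coord j F w powr (1 - l)
        \<le> integral_coord j F (\<lambda>k. l * z k + (1 - l) * w k)"
    unfolding integral_coord_def
    using log_concaveD(1)[OF assms(1)] C box_supportedD(3)[OF assms(2,3)] l
      log_concave_superlevel_convex[OF assms(1)] log_concave_fun_upd[OF assms(1)]
    by (intro prekopa_leindler[where n = n and C = C]) auto
qed (simp add: integral_coord_def)

lemma integral_coord_even:
  assumes "F \<in> borel_measurable lborel_fun" "\<And>z. F (- z) = F z"
  shows "integral_coord j F (- z) = integral_coord j F z"
proof -
  have [measurable]: "F \<in> borel_measurable lborel_fun" by (rule assms(1))
  have "(- z)(j := t) = - (z(j := - t))" for t by auto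
  then have "(\<integral>\<^sup>+t. ennreal (F ((- z)(j := t))) \<partial>lborel) = (\<integral>\<^sup>+t. ennreal (F (z(j := - t))) \<partial>lborel)"
    by (simp add: assms(2))
  also have "\<dots> = (\<integral>\<^sup>+t. ennreal (F (z(j := t))) \<partial>lborel)"
    using nn_integral_real_affine[of "\<lambda>t. ennreal (F (z(j := t)))" "-1" 0] by simp
  finally show ?thesis by (simp add: integral_coord_def)
qed

lemma box_supported_integral_coord:
  assumes "box_supported n (insert j S) F" "j \<notin> S"
  shows "box_supported n S (integral_coord j F)"
  unfolding box_supported_def
proof (intro conjI allI impI)
  have [measurable]: "F \<in> borel_measurable lborel_fun" by (rule box_supportedD(1)[OF assms(1)])
  show "integral_coord j F \<in> borel_measurable lborel_fun"
    unfolding integral_coord_def[abs_def]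
    by (intro borel_measurable_enn2real lborel.borel_measurable_nn_integral) measurable
  obtain C where C: "\<And>z. F z \<le> C" using box_supportedD(2)[OF assms(1)] by blast
  have "F (z(j := t)) = 0" if "n < \<bar>t\<bar>" for z t
    using box_supportedD(3)[OF assms(1), of j "z(j := t)"] that by simp
  then have "integral_coord j F z \<le> enn2real (ennreal C * emeasure lborel {-n..n})" for z
    unfolding integral_coord_def using C
    by (intro enn2real_mono nn_integral_bounded_support_le emeasure_lborel_Icc_times_less_top)
  then show "bdd_above (range (integral_coord j F))" by (meson bdd_aboveI2)
  fix z assume "\<exists>k\<in>S. n < \<bar>z k\<bar>"
  then have "F (z(j := t)) = 0" for t
    using box_supportedD(3)[OF assms(1)] assms(2) by (metis fun_upd_other insertCI)
  then show "integral_coord j F z = 0" by (simp add: integral_coord_def)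
qed

lemma override_on_insert_fun_upd:
  "override_on x (y(j := t)) (insert j S) = (override_on x y S)(j := t)"
  by (auto simp: override_on_def)

theorem prekopa_marginal:
  assumes "finite S" "log_concave F" "\<And>z. F (- z) = F z" "box_supported n S F"
  shows "\<exists>\<Phi>. log_concave \<Phi> \<and> (\<forall>z. \<Phi> (- z) = \<Phi> z) \<and>
    (\<forall>x. (\<integral>\<^sup>+y. ennreal (F (override_on x y S)) \<partial>PiM S (\<lambda>_. lborel)) = ennreal (\<Phi> x))"
  using assms
proof (induction S arbitrary: F rule: finite_induct)
  case empty
  then show ?case by (intro exI[of _ F]) (simp add: PiM_empty nn_integral_count_space_finite)
next
  case (insert j S)
  interpret product_sigma_finite "\<lambda>_::'a. lborel" by standard
  have [measurable]: "F \<in> borel_measurable lborel_fun" by (rule box_supportedD(1)[OF insert.prems(3)])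
  let ?G = "integral_coord j F"
  have "log_concave ?G" "\<And>z. ?G (- z) = ?G z" "box_supported n S ?G"
    using log_concave_integral_coord[OF insert.prems(1,3)] integral_coord_even[of F] insert.prems(2)
      box_supported_integral_coord[OF insert.prems(3) insert.hyps(2)] by simp_all
  then obtain \<Phi> where \<Phi>: "log_concave \<Phi>" "\<And>z. \<Phi> (- z) = \<Phi> z"
    "\<And>x. (\<integral>\<^sup>+y. ennreal (?G (override_on x y S)) \<partial>PiM S (\<lambda>_. lborel)) = ennreal (\<Phi> x)"
    using insert.IH by blast
  have "(\<integral>\<^sup>+y. ennreal (F (override_on x y (insert j S))) \<partial>PiM (insert j S) (\<lambda>_. lborel))
      = ennreal (\<Phi> x)" for x
  proof -
    have "(\<integral>\<^sup>+y. ennreal (F (override_on x y (insert j S))) \<partial>PiM (insert j S) (\<lambda>_. lborel))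
       = (\<integral>\<^sup>+y. (\<integral>\<^sup>+t. ennreal (F ((override_on x y S)(j := t))) \<partial>lborel) \<partial>PiM S (\<lambda>_. lborel))"
      by (subst product_nn_integral_insert) (simp_all add: insert.hyps override_on_insert_fun_upd)
    also have "\<dots> = (\<integral>\<^sup>+y. ennreal (?G (override_on x y S)) \<partial>PiM S (\<lambda>_. lborel))"
      by (intro nn_integral_cong nn_integral_eq_integral_coord[OF insert.prems(3)]) simp
    also have "\<dots> = ennreal (\<Phi> x)" by (rule \<Phi>(3))
    finally show ?thesis .
  qed
  with \<Phi> show ?case by blast
qed

lemma log_concave_even_scale_mono:
  assumes "log_concave \<Phi>" "\<And>z. \<Phi> (- z) = \<Phi> z" "\<bar>c\<bar> \<le> 1"
  shows "\<Phi> z \<le> \<Phi> (\<lambda>k. c * z k)"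
proof (cases "\<bar>c\<bar> = 1")
  case True
  then have "(\<lambda>k. c * z k) = z \<or> (\<lambda>k. c * z k) = - z" by (auto simp: abs_if split: if_splits)
  then show ?thesis using assms(2) by auto
next
  case False
  define l where "l = (1 + c) / 2"
  have l: "0 < l" "l < 1" using assms(3) False by (auto simp: l_def abs_if split: if_splits)
  have "(\<lambda>k. l * z k + (1 - l) * (- z) k) = (\<lambda>k. c * z k)" by (auto simp: l_def field_simps)
  then have "\<Phi> z powr l * \<Phi> (- z) powr (1 - l) \<le> \<Phi> (\<lambda>k. c * z k)"
    using log_concaveD(2)[OF assms(1) l, of z "- z"] by simp
  moreover have "\<Phi> z powr l * \<Phi> (- z) powr (1 - l) = \<Phi> z"
    using assms(2) log_concaveD(1)[OF assms(1), of z] by (cases "\<Phi> z = 0") (simp_all add: powr_add[symmetric])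
  ultimately show ?thesis by simp
qed

definition truncation :: "real \<Rightarrow> 'i set \<Rightarrow> (('i \<Rightarrow> real) \<Rightarrow> real) \<Rightarrow> ('i \<Rightarrow> real) \<Rightarrow> real" where
  "truncation N S F z = (if \<forall>k\<in>S. \<bar>z k\<bar> \<le> N then min (F z) N else 0)"

lemma powr_combination_mono:
  fixes x y X Y l :: real
  assumes "0 \<le> x" "x \<le> X" "0 \<le> y" "y \<le> Y" "0 < l" "l < 1"
  shows "x powr l * y powr (1 - l) \<le> X powr l * Y powr (1 - l)"
  using assms by (intro mult_mono powr_mono2) auto

lemma log_concave_truncation:
  assumes "log_concave F" "0 \<le> N"
  shows "log_concave (truncation N S F)"
  unfolding log_concave_def
proof (intro conjI allI impI)
  show "0 \<le> truncation N S F z" for z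
    using log_concaveD(1)[OF assms(1)] assms(2) by (simp add: truncation_def)
  fix z w :: "'a \<Rightarrow> real" and l :: real
  assume "0 < l \<and> l < 1"
  then have l: "0 < l" "l < 1" by auto
  let ?m = "\<lambda>k. l * z k + (1 - l) * w k"
  show "truncation N S F z powr l * truncation N S F w powr (1 - l) \<le> truncation N S F ?m"
  proof (cases "(\<forall>k\<in>S. \<bar>z k\<bar> \<le> N) \<and> (\<forall>k\<in>S. \<bar>w k\<bar> \<le> N)")
    case True
    have "\<bar>?m k\<bar> \<le> N" if "k \<in> S" for k
    proof -
      have "\<bar>?m k\<bar> \<le> l * \<bar>z k\<bar> + (1 - l) * \<bar>w k\<bar>"
        using l abs_triangle_ineq[of "l * z k" "(1 - l) * w k"] by (simp add: abs_mult)
      also have "\<dots> \<le> l * N + (1 - l) * N"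
        using True that l by (intro add_mono mult_left_mono) auto
      finally show ?thesis by (simp add: algebra_simps)
    qed
    moreover have "min (F z) N powr l * min (F w) N powr (1 - l) \<le> F z powr l * F w powr (1 - l)"
      and "min (F z) N powr l * min (F w) N powr (1 - l) \<le> N powr l * N powr (1 - l)"
      using log_concaveD(1)[OF assms(1)] assms(2) l by (intro powr_combination_mono; simp)+
    moreover have "N powr l * N powr (1 - l) = N" using assms(2) by (cases "N = 0") (simp_all add: powr_add[symmetric])
    ultimately show ?thesis
      using True log_concaveD(2)[OF assms(1) l, of z w] by (auto simp: truncation_def)
  qed (use log_concaveD(1)[OF assms(1)] assms(2) in \<open>auto simp: truncation_def\<close>)
qed

lemma truncation_even:
  assumes "\<And>z. F (- z) = F z"
  shows "truncation N S F (- z) = truncation N S F z"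
  using assms by (simp add: truncation_def)

lemma box_supported_truncation:
  assumes "finite S" "F \<in> borel_measurable lborel_fun"
  shows "box_supported N S (truncation N S F)"
  unfolding box_supported_def
proof (intro conjI allI impI)
  have [measurable]: "finite S" "F \<in> borel_measurable lborel_fun" by (fact assms)+
  show "truncation N S F \<in> borel_measurable lborel_fun"
    unfolding truncation_def[abs_def] by measurable
  show "bdd_above (range (truncation N S F))"
    by (rule bdd_aboveI2[of _ _ "max N 0"]) (auto simp: truncation_def)
qed (auto simp: truncation_def)

lemma SUP_truncation:
  assumes "finite S" "0 \<le> F z"
  shows "(SUP N::nat. ennreal (truncation (real N) S F z)) = ennreal (F z)"
proof (rule antisym)
  show "(SUP N::nat. ennreal (truncation (real N) S F z)) \<le> ennreal (F z)"
    using assms(2) by (intro SUP_least ennreal_leI) (simp add: truncation_def)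
  obtain N :: nat where N: "Max (insert (F z) ((\<lambda>k. \<bar>z k\<bar>) ` S)) \<le> real N"
    using real_arch_simple by blast
  then have "F z \<le> real N" "\<forall>k\<in>S. \<bar>z k\<bar> \<le> real N"
    using assms(1) by (auto intro: order.trans[OF Max_ge])
  then have "truncation (real N) S F z = F z" by (simp add: truncation_def)
  then show "ennreal (F z) \<le> (SUP N::nat. ennreal (truncation (real N) S F z))"
    by (metis SUP_upper UNIV_I)
qed

text \<open>The truncations of \<open>F\<close> satisfy the finiteness hypotheses of Prekopa's theorem and
  increase to \<open>F\<close>; monotone convergence passes the monotonicity to the limit.\<close>
theorem marginal_radially_nonincreasing:
  assumes "finite S" "log_concave F" "\<And>z. F (- z) = F z" "F \<in> borel_measurable lborel_fun"
    and "\<bar>c\<bar> \<le> 1"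
  shows "(\<integral>\<^sup>+y. ennreal (F (override_on x y S)) \<partial>PiM S (\<lambda>_. lborel))
         \<le> (\<integral>\<^sup>+y. ennreal (F (override_on (\<lambda>k. c * x k) y S)) \<partial>PiM S (\<lambda>_. lborel))"
proof -
  have "\<exists>\<Phi>. log_concave \<Phi> \<and> (\<forall>z. \<Phi> (- z) = \<Phi> z) \<and>
      (\<forall>x. (\<integral>\<^sup>+y. ennreal (truncation (real N) S F (override_on x y S)) \<partial>PiM S (\<lambda>_. lborel)) = ennreal (\<Phi> x))"
    for N :: nat
    by (rule prekopa_marginal[OF assms(1) log_concave_truncation[OF assms(2)] truncation_even[of F, OF assms(3)]
        box_supported_truncation[OF assms(1,4)]]) simp
  then obtain \<Phi> where \<Phi>: "\<And>N. log_concave (\<Phi> N)" "\<And>N z. \<Phi> N (- z) = \<Phi> N z"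
    "\<And>N x. (\<integral>\<^sup>+y. ennreal (truncation (real N) S F (override_on x y S)) \<partial>PiM S (\<lambda>_. lborel)) = ennreal (\<Phi> N x)"
    by (metis (no_types))
  have SUP_\<Phi>: "(\<integral>\<^sup>+y. ennreal (F (override_on x y S)) \<partial>PiM S (\<lambda>_. lborel)) = (SUP N::nat. ennreal (\<Phi> N x))"
    for x
  proof -
    have [measurable]: "F \<in> borel_measurable lborel_fun" "finite S" by (fact assms)+
    have "(\<integral>\<^sup>+y. ennreal (F (override_on x y S)) \<partial>PiM S (\<lambda>_. lborel))
        = (\<integral>\<^sup>+y. (SUP N::nat. ennreal (truncation N S F (override_on x y S))) \<partial>PiM S (\<lambda>_. lborel))"
      using SUP_truncation[of S F, OF assms(1) log_concaveD(1)[OF assms(2)]] by simp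
    also have "\<dots> = (SUP N::nat. (\<integral>\<^sup>+y. ennreal (truncation N S F (override_on x y S)) \<partial>PiM S (\<lambda>_. lborel)))"
      using log_concaveD(1)[OF assms(2)]
      by (intro nn_integral_monotone_convergence_SUP)
        (auto simp: incseq_def le_fun_def truncation_def[abs_def] intro!: ennreal_leI)
    finally show ?thesis by (simp add: \<Phi>(3))
  qed
  show ?thesis
    unfolding SUP_\<Phi> by (intro SUP_mono' ennreal_leI log_concave_even_scale_mono \<Phi> assms(5))
qed

definition coordinate_marginal :: "'i set \<Rightarrow> 'i \<Rightarrow> (('i \<Rightarrow> real) \<Rightarrow> real) \<Rightarrow> real \<Rightarrow> ennreal" where
  "coordinate_marginal S i F s =
     (\<integral>\<^sup>+y. ennreal (F (override_on ((\<lambda>_. 0)(i := s)) y S)) \<partial>PiM S (\<lambda>_. lborel))"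

lemma borel_measurable_coordinate_marginal:
  assumes "finite S" "F \<in> borel_measurable lborel_fun"
  shows "coordinate_marginal S i F \<in> borel_measurable borel"
proof -
  interpret product_sigma_finite "\<lambda>_::'a. lborel" by standard
  have "(\<lambda>p k. (\<lambda>k p. if k \<in> S then snd p k else ((\<lambda>_. 0)(i := fst p)) k) k p)
       \<in> measurable (lborel \<Otimes>\<^sub>M PiM S (\<lambda>_. lborel)) lborel_fun"
  proof (rule measurable_PiM_single')
    fix k :: 'a
    show "(\<lambda>p. if k \<in> S then snd p k else ((\<lambda>_. 0)(i := fst p)) k)
        \<in> measurable (lborel \<Otimes>\<^sub>M PiM S (\<lambda>_. lborel)) lborel"
      by (cases "k \<in> S"; cases "k = i") simp_all
  qed simp
  then have "(\<lambda>p. ennreal (F (override_on ((\<lambda>_. 0)(i := fst p)) (snd p) S)))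
      \<in> borel_measurable (lborel \<Otimes>\<^sub>M PiM S (\<lambda>_. lborel))"
    using assms(2) by (simp add: override_on_def[abs_def])
  then show ?thesis
    unfolding coordinate_marginal_def[abs_def] using assms(1)
    by (intro sigma_finite_measure.borel_measurable_nn_integral sigma_finite) (simp_all add: case_prod_beta')
qed

lemma coordinate_marginal_radially_nonincreasing:
  assumes "finite S" "log_concave F" "\<And>z. F (- z) = F z" "F \<in> borel_measurable lborel_fun"
    and "\<bar>s'\<bar> \<le> \<bar>s\<bar>"
  shows "coordinate_marginal S i F s \<le> coordinate_marginal S i F s'"
proof (cases "s = 0")
  case False
  have "\<bar>s' / s\<bar> \<le> 1" using assms(5) False by (simp add: abs_divide divide_le_eq_1)
  moreover have "(\<lambda>k. s' / s * ((\<lambda>_. 0)(i := s)) k) = (\<lambda>_. 0)(i := s')" using False by auto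
  ultimately show ?thesis
    using marginal_radially_nonincreasing[OF assms(1-4), of "s' / s" "(\<lambda>_. 0)(i := s)"]
    by (simp add: coordinate_marginal_def)
qed (use assms(5) in simp)

lemma borel_measurable_PiM_local:
  assumes "F \<in> borel_measurable lborel_fun" "\<And>z z'. (\<And>k. k \<in> \<Lambda> \<Longrightarrow> z k = z' k) \<Longrightarrow> F z = F z'"
  shows "F \<in> borel_measurable (PiM \<Lambda> (\<lambda>_. lborel))"
proof -
  have "F h = F (override_on (\<lambda>_. 0) h \<Lambda>)" for h by (rule assms(2)) (simp add: override_on_def)
  then have "F = (\<lambda>h. F (override_on (\<lambda>_. 0) h \<Lambda>))" ..
  also have "\<dots> \<in> borel_measurable (PiM \<Lambda> (\<lambda>_. lborel))"
    using measurable_compose[OF measurable_override_on assms(1)] .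
  finally show ?thesis .
qed

lemma nn_integral_PiM_coordinate:
  assumes "finite \<Lambda>" "i \<in> \<Lambda>" "F \<in> borel_measurable lborel_fun"
    and local: "\<And>z z'. (\<And>k. k \<in> \<Lambda> \<Longrightarrow> z k = z' k) \<Longrightarrow> F z = F z'"
    and [measurable]: "\<psi> \<in> borel_measurable borel"
  shows "(\<integral>\<^sup>+h. \<psi> (h i) * ennreal (F h) \<partial>PiM \<Lambda> (\<lambda>_. lborel))
       = (\<integral>\<^sup>+s. \<psi> s * coordinate_marginal (\<Lambda> - {i}) i F s \<partial>lborel)"
proof -
  interpret product_sigma_finite "\<lambda>_::'a. lborel" by standard
  define I where "I = \<Lambda> - {i}"
  have \<Lambda>: "\<Lambda> = insert i I" "finite I" "i \<notin> I" using assms(1,2) by (auto simp: I_def)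
  have [measurable]: "F \<in> borel_measurable (PiM (insert i I) (\<lambda>_. lborel))"
    using borel_measurable_PiM_local[OF assms(3) local] \<Lambda>(1) by simp
  have "(\<integral>\<^sup>+h. \<psi> (h i) * ennreal (F h) \<partial>PiM \<Lambda> (\<lambda>_. lborel))
      = (\<integral>\<^sup>+s. (\<integral>\<^sup>+y. \<psi> s * ennreal (F (y(i := s))) \<partial>PiM I (\<lambda>_. lborel)) \<partial>lborel)"
    unfolding \<Lambda>(1) by (subst product_nn_integral_insert_rev) (simp_all add: \<Lambda>)
  also have "\<dots> = (\<integral>\<^sup>+s. \<psi> s * coordinate_marginal I i F s \<partial>lborel)"
  proof (intro nn_integral_cong)
    fix s
    have "F (y(i := s)) = F (override_on ((\<lambda>_. 0)(i := s)) y I)" for y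
      by (rule local) (auto simp: override_on_def I_def)
    then show "(\<integral>\<^sup>+y. \<psi> s * ennreal (F (y(i := s))) \<partial>PiM I (\<lambda>_. lborel)) = \<psi> s * coordinate_marginal I i F s"
      using assms(3) by (simp add: coordinate_marginal_def nn_integral_cmult)
  qed
  finally show ?thesis by (simp add: I_def)
qed

section \<open>Concentration of symmetric unimodal densities\<close>

lemma nn_integral_symmetric_interval_scale:
  fixes g :: "real \<Rightarrow> ennreal"
  assumes [measurable]: "g \<in> borel_measurable borel" and "0 < a"
  shows "(\<integral>\<^sup>+s. indicator {-a..a} s * g s \<partial>lborel)
       = ennreal a * (\<integral>\<^sup>+u. indicator {-1..1} u * g (a * u) \<partial>lborel)"
proof -
  have "-a \<le> a * u \<longleftrightarrow> -1 \<le> u" "a * u \<le> a \<longleftrightarrow> u \<le> 1" for u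
    using mult_le_cancel_left_pos[OF assms(2), of "-1" u] mult_le_cancel_left_pos[OF assms(2), of u 1]
    by simp_all
  then have "indicator {-a..a} (a * u) = (indicator {-1..1} u :: ennreal)" for u
    by (simp add: indicator_def)
  then show ?thesis
    using nn_integral_real_affine[of "\<lambda>s. indicator {-a..a} s * g s" a 0] assms(2) by simp
qed

lemma unimodal_interval_mass_scaling:
  fixes g :: "real \<Rightarrow> ennreal"
  assumes "g \<in> borel_measurable borel" and mono: "\<And>s s'. \<bar>s'\<bar> \<le> \<bar>s\<bar> \<Longrightarrow> g s \<le> g s'"
    and "0 < a" "a \<le> t"
  shows "ennreal a * (\<integral>\<^sup>+s. indicator {-t..t} s * g s \<partial>lborel)
       \<le> ennreal t * (\<integral>\<^sup>+s. indicator {-a..a} s * g s \<partial>lborel)"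
proof -
  have "(\<integral>\<^sup>+u. indicator {-1..1} u * g (t * u) \<partial>lborel) \<le> (\<integral>\<^sup>+u. indicator {-1..1} u * g (a * u) \<partial>lborel)"
    using assms(3,4) by (intro nn_integral_mono mult_left_mono mono) (auto simp: abs_mult intro: mult_right_mono)
  then show ?thesis
    using assms(3,4) by (simp add: nn_integral_symmetric_interval_scale[OF assms(1)] mult.left_commute
        mult_left_mono)
qed

lemma nn_integral_split_interval:
  fixes g :: "real \<Rightarrow> ennreal"
  assumes "g \<in> borel_measurable borel"
  shows "(\<integral>\<^sup>+s. g s \<partial>lborel)
       = (\<integral>\<^sup>+s. indicator {-t..t} s * g s \<partial>lborel) + (\<integral>\<^sup>+s. indicator (- {-t..t}) s * g s \<partial>lborel)"
  using assms by (subst nn_integral_add[symmetric]) (auto intro!: nn_integral_cong simp: indicator_def)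

lemma markov_outside_interval:
  fixes g :: "real \<Rightarrow> ennreal"
  assumes "g \<in> borel_measurable borel"
  shows "ennreal t * (\<integral>\<^sup>+s. indicator (- {-t..t}) s * g s \<partial>lborel) \<le> (\<integral>\<^sup>+s. ennreal \<bar>s\<bar> * g s \<partial>lborel)"
  using assms by (subst nn_integral_cmult[symmetric])
    (auto intro!: nn_integral_mono mult_right_mono ennreal_leI simp: indicator_def)

lemma nn_integral_indicator_mult_finite:
  assumes "(\<integral>\<^sup>+s. g s \<partial>M) = ennreal Z"
  shows "(\<integral>\<^sup>+s. indicator S s * g s \<partial>M) = ennreal (enn2real (\<integral>\<^sup>+s. indicator S s * g s \<partial>M))"
proof -
  have "(\<integral>\<^sup>+s. indicator S s * g s \<partial>M) \<le> ennreal Z"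
    unfolding assms[symmetric] by (intro nn_integral_mono) (simp add: indicator_def)
  then have "(\<integral>\<^sup>+s. indicator S s * g s \<partial>M) < top"
    using ennreal_less_top order.strict_trans1 by blast
  then show ?thesis by simp
qed

lemma markov_half_mass:
  fixes g :: "real \<Rightarrow> ennreal"
  assumes g: "g \<in> borel_measurable borel"
    and Z: "(\<integral>\<^sup>+s. g s \<partial>lborel) = ennreal Z" "0 < Z"
    and M: "(\<integral>\<^sup>+s. ennreal \<bar>s\<bar> * g s \<partial>lborel) = ennreal M" "0 < M"
  defines "t \<equiv> 2 * M / Z"
  shows "Z / 2 \<le> enn2real (\<integral>\<^sup>+s. indicator {-t..t} s * g s \<partial>lborel)"
proof -
  define P where "P S = enn2real (\<integral>\<^sup>+s. indicator S s * g s \<partial>lborel)" for S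
  note P_eq = nn_integral_indicator_mult_finite[OF Z(1), folded P_def]
  have P_nonneg: "0 \<le> P S" for S by (simp add: P_def)
  have t: "0 < t" using Z M by (simp add: t_def)
  have "ennreal Z = ennreal (P {-t..t} + P (- {-t..t}))"
    using nn_integral_split_interval[OF g, of t] by (simp add: Z P_eq P_nonneg)
  then have split: "Z = P {-t..t} + P (- {-t..t})"
    using Z(2) P_nonneg by (simp del: ennreal_plus add: ennreal_plus[symmetric])
  have "ennreal (t * P (- {-t..t})) \<le> ennreal M"
    using markov_outside_interval[OF g, of t] t P_nonneg unfolding M(1)
    by (simp add: P_eq ennreal_mult)
  then have "t * P (- {-t..t}) \<le> M" using M(2) by simp
  then have "P (- {-t..t}) \<le> Z / 2" using t Z(2) by (simp add: t_def field_simps)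
  with split show ?thesis by (simp add: P_def)
qed

text \<open>If \<open>a < t = 2 E|s|\<close>, unimodality transfers the fraction \<open>a / t\<close> of the mass of \<open>[-t, t]\<close>
  to \<open>[-a, a]\<close>. The cases where the total mass is \<open>0\<close> or \<open>\<infinity>\<close> or \<open>E|s| = \<infinity>\<close> are trivial,
  because \<open>enn2real \<infinity> = 0\<close> and \<open>x / 0 = 0\<close>.\<close>
theorem symmetric_unimodal_mass_lower_bound:
  fixes g :: "real \<Rightarrow> ennreal" and a :: real
  assumes g[measurable]: "g \<in> borel_measurable borel"
    and mono: "\<And>s s'. \<bar>s'\<bar> \<le> \<bar>s\<bar> \<Longrightarrow> g s \<le> g s'"
    and a: "0 < a"
  defines "Z \<equiv> enn2real (\<integral>\<^sup>+s. g s \<partial>lborel)"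
  shows "min (a / (4 * enn2real (ennreal (1 / Z) * (\<integral>\<^sup>+s. ennreal \<bar>s\<bar> * g s \<partial>lborel)))) (1/2)
         \<le> enn2real (ennreal (1 / Z) * (\<integral>\<^sup>+s. indicator {-a..a} s * g s \<partial>lborel))"
proof -
  define M where "M = enn2real (\<integral>\<^sup>+s. ennreal \<bar>s\<bar> * g s \<partial>lborel)"
  define P where "P S = enn2real (\<integral>\<^sup>+s. indicator S s * g s \<partial>lborel)" for S
  have "0 \<le> Z" "0 \<le> M" by (simp_all add: Z_def M_def)
  then consider "Z = 0" | "M = 0" | "0 < Z" "0 < M" by fastforce
  then show ?thesis
  proof cases
    case 3
    have Z: "(\<integral>\<^sup>+s. g s \<partial>lborel) = ennreal Z" using 3 by (simp add: Z_def enn2real_positive_iff)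
    have M: "(\<integral>\<^sup>+s. ennreal \<bar>s\<bar> * g s \<partial>lborel) = ennreal M" using 3 by (simp add: M_def enn2real_positive_iff)
    note P_eq = nn_integral_indicator_mult_finite[OF Z, folded P_def]
    have P_nonneg: "0 \<le> P S" for S by (simp add: P_def)
    define t where "t = 2 * M / Z"
    have t: "0 < t" using 3 by (simp add: t_def)
    have half: "Z / 2 \<le> P {-t..t}"
      using markov_half_mass[OF g Z(1) _ M] 3 by (simp add: P_def t_def)
    have "min (a / (4 * (M / Z))) (1/2) \<le> P {-a..a} / Z"
    proof (cases "t \<le> a")
      case True
      have "ennreal (P {-t..t}) \<le> ennreal (P {-a..a})"
        unfolding P_eq[symmetric] using True by (intro nn_integral_mono) (auto simp: indicator_def)
      with half 3 have "1 / 2 \<le> P {-a..a} / Z" by (simp add: P_nonneg field_simps)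
      then show ?thesis by linarith
    next
      case False
      have "ennreal (a * P {-t..t}) \<le> ennreal (t * P {-a..a})"
        using unimodal_interval_mass_scaling[OF g mono a, of t] False a t
        by (simp add: P_eq P_nonneg ennreal_mult)
      then have "a * P {-t..t} \<le> t * P {-a..a}" using t P_nonneg by simp
      with half a t have "a * (Z / 2) \<le> t * P {-a..a}"
        by (meson mult_left_mono order.trans less_imp_le)
      then have "a / (4 * (M / Z)) \<le> P {-a..a} / Z" using 3 by (simp add: t_def field_simps)
      then show ?thesis by linarith
    qed
    then show ?thesis using 3 by (simp add: M_def enn2real_mult P_def)
  qed (simp_all add: M_def enn2real_mult P_def)
qed

section \<open>The Gibbs measure\<close>

lemma admissible_potential_even: "admissible_potential r \<Psi> \<Longrightarrow> \<Psi> k (- x) = \<Psi> k x"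
  unfolding admissible_potential_def by metis

lemma admissible_potential_convex:
  assumes "admissible_potential r \<Psi>"
  shows "convex_on UNIV (\<Psi> k)"
proof (rule convex_on_realI[where f' = "deriv (\<Psi> k)"])
  have d1: "\<And>x. \<Psi> k differentiable at x" and d2: "\<And>x. deriv (\<Psi> k) differentiable at x"
    and pos: "\<And>x. deriv (deriv (\<Psi> k)) x \<ge> 0"
    using assms unfolding admissible_potential_def by blast+
  show "(\<Psi> k has_real_derivative deriv (\<Psi> k) x) (at x)" for x
    using d1 DERIV_deriv_iff_real_differentiable by blast
  show "deriv (\<Psi> k) x \<le> deriv (\<Psi> k) y" if "x \<le> y" for x y
    using that
    by (rule deriv_nonneg_imp_mono[where g' = "deriv (deriv (\<Psi> k))", rotated 2])
       (use d2 DERIV_deriv_iff_real_differentiable pos in blast)+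
qed simp

lemma admissible_potential_borel_measurable:
  assumes "admissible_potential r \<Psi>"
  shows "\<Psi> k \<in> borel_measurable borel"
proof (rule borel_measurable_continuous_onI)
  have "\<And>x. \<Psi> k differentiable at x" using assms unfolding admissible_potential_def by blast
  then show "continuous_on UNIV (\<Psi> k)"
    by (meson continuous_at_imp_continuous_on differentiable_imp_continuous_within)
qed

lemma hamiltonian_convex:
  assumes "admissible_potential r \<Psi>" "0 \<le> l" "l \<le> 1"
  shows "hamiltonian r \<Psi> \<Lambda> 0 (\<lambda>k. l * z k + (1 - l) * w k)
         \<le> l * hamiltonian r \<Psi> \<Lambda> 0 z + (1 - l) * hamiltonian r \<Psi> \<Lambda> 0 w"
proof -
  let ?e = "ext_conf \<Lambda> 0" and ?m = "\<lambda>k. l * z k + (1 - l) * w k"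
  have convex_term: "\<Psi> (site_diff q p) (?e ?m p - ?e ?m q)
      \<le> l * \<Psi> (site_diff q p) (?e z p - ?e z q) + (1 - l) * \<Psi> (site_diff q p) (?e w p - ?e w q)" for p q
  proof -
    have "?e ?m p - ?e ?m q = (1 - (1 - l)) *\<^sub>R (?e z p - ?e z q) + (1 - l) *\<^sub>R (?e w p - ?e w q)"
      by (simp add: ext_conf_def algebra_simps)
    then show ?thesis
      using convex_onD[OF admissible_potential_convex[OF assms(1)], of "1 - l"] assms(2,3) by simp
  qed
  have "(\<Sum>(p, q)\<in>pairs r \<Lambda>. \<Psi> (site_diff q p) (?e ?m p - ?e ?m q))
      \<le> (\<Sum>(p, q)\<in>pairs r \<Lambda>. l * \<Psi> (site_diff q p) (?e z p - ?e z q) + (1 - l) * \<Psi> (site_diff q p) (?e w p - ?e w q))"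
    by (rule sum_mono) (use convex_term in auto)
  also have "\<dots> = l * (\<Sum>(p, q)\<in>pairs r \<Lambda>. \<Psi> (site_diff q p) (?e z p - ?e z q))
      + (1 - l) * (\<Sum>(p, q)\<in>pairs r \<Lambda>. \<Psi> (site_diff q p) (?e w p - ?e w q))"
    by (simp add: sum.distrib sum_distrib_left case_prod_beta)
  finally show ?thesis unfolding hamiltonian_def by (simp add: field_simps)
qed

lemma hamiltonian_even:
  assumes "admissible_potential r \<Psi>"
  shows "hamiltonian r \<Psi> \<Lambda> 0 (- z) = hamiltonian r \<Psi> \<Lambda> 0 z"
proof -
  have "\<Psi> k (ext_conf \<Lambda> 0 (- z) p - ext_conf \<Lambda> 0 (- z) q) = \<Psi> k (ext_conf \<Lambda> 0 z p - ext_conf \<Lambda> 0 z q)"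
    for k p q
  proof -
    have "ext_conf \<Lambda> 0 (- z) p - ext_conf \<Lambda> 0 (- z) q = - (ext_conf \<Lambda> 0 z p - ext_conf \<Lambda> 0 z q)"
      by (simp add: ext_conf_def)
    then show ?thesis by (simp only: admissible_potential_even[OF assms])
  qed
  then show ?thesis unfolding hamiltonian_def by simp
qed

lemma hamiltonian_local:
  assumes "\<And>k. k \<in> \<Lambda> \<Longrightarrow> z k = z' k"
  shows "hamiltonian r \<Psi> \<Lambda> b z = hamiltonian r \<Psi> \<Lambda> b z'"
proof -
  have "ext_conf \<Lambda> b z = ext_conf \<Lambda> b z'" using assms by (auto simp: ext_conf_def)
  then show ?thesis unfolding hamiltonian_def by simp
qed

lemma hamiltonian_borel_measurable:
  assumes "admissible_potential r \<Psi>"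
  shows "hamiltonian r \<Psi> \<Lambda> b \<in> borel_measurable lborel_fun"
proof -
  have [measurable]: "\<Psi> k \<in> borel_measurable borel" for k
    by (rule admissible_potential_borel_measurable[OF assms])
  have [measurable]: "(\<lambda>z. ext_conf \<Lambda> b z p) \<in> borel_measurable lborel_fun" for p
    unfolding ext_conf_def by (cases "p \<in> \<Lambda>") simp_all
  show ?thesis
    unfolding hamiltonian_def[abs_def] by (simp add: case_prod_beta)
qed

abbreviation boltzmann_weight :: "nat \<Rightarrow> (site \<Rightarrow> real \<Rightarrow> real) \<Rightarrow> site set \<Rightarrow> (site \<Rightarrow> real) \<Rightarrow> real" where
  "boltzmann_weight r \<Psi> \<Lambda> z \<equiv> exp (- hamiltonian r \<Psi> \<Lambda> 0 z)"

lemma log_concave_boltzmann_weight: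
  assumes "admissible_potential r \<Psi>"
  shows "log_concave (boltzmann_weight r \<Psi> \<Lambda>)"
  unfolding log_concave_def
proof (intro conjI allI impI)
  fix z w :: "site \<Rightarrow> real" and l :: real
  assume "0 < l \<and> l < 1"
  then show "boltzmann_weight r \<Psi> \<Lambda> z powr l * boltzmann_weight r \<Psi> \<Lambda> w powr (1 - l)
        \<le> boltzmann_weight r \<Psi> \<Lambda> (\<lambda>k. l * z k + (1 - l) * w k)"
    using hamiltonian_convex[OF assms, of l \<Lambda> z w]
    by (simp add: powr_def exp_add[symmetric] algebra_simps)
qed simp

lemma borel_measurable_boltzmann_weight:
  "admissible_potential r \<Psi> \<Longrightarrow> boltzmann_weight r \<Psi> \<Lambda> \<in> borel_measurable lborel_fun"
  using hamiltonian_borel_measurable[of r \<Psi> \<Lambda> 0] by measurable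

lemma boltzmann_weight_local:
  "(\<And>k. k \<in> \<Lambda> \<Longrightarrow> z k = z' k) \<Longrightarrow> boltzmann_weight r \<Psi> \<Lambda> z = boltzmann_weight r \<Psi> \<Lambda> z'"
  using hamiltonian_local[of \<Lambda> z z' r \<Psi> 0] by simp

abbreviation gibbs_marginal :: "nat \<Rightarrow> (site \<Rightarrow> real \<Rightarrow> real) \<Rightarrow> site set \<Rightarrow> site \<Rightarrow> real \<Rightarrow> ennreal" where
  "gibbs_marginal r \<Psi> \<Lambda> i \<equiv> coordinate_marginal (\<Lambda> - {i}) i (boltzmann_weight r \<Psi> \<Lambda>)"

lemma partition_fn_eq_gibbs_marginal:
  assumes "admissible_potential r \<Psi>" "finite \<Lambda>" "i \<in> \<Lambda>"
  shows "partition_fn r \<Psi> \<Lambda> 0 = enn2real (\<integral>\<^sup>+s. gibbs_marginal r \<Psi> \<Lambda> i s \<partial>lborel)"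
proof -
  note E = borel_measurable_boltzmann_weight[OF assms(1)] boltzmann_weight_local
  have "partition_fn r \<Psi> \<Lambda> 0 = enn2real (\<integral>\<^sup>+h. ennreal (boltzmann_weight r \<Psi> \<Lambda> h) \<partial>PiM \<Lambda> (\<lambda>_. lborel))"
    unfolding partition_fn_def ref_measure_def
    using borel_measurable_PiM_local[OF E] by (intro integral_eq_nn_integral) auto
  also have "(\<integral>\<^sup>+h. ennreal (boltzmann_weight r \<Psi> \<Lambda> h) \<partial>PiM \<Lambda> (\<lambda>_. lborel))
      = (\<integral>\<^sup>+s. gibbs_marginal r \<Psi> \<Lambda> i s \<partial>lborel)"
    using nn_integral_PiM_coordinate[OF assms(2,3) E, where \<psi> = "\<lambda>_. 1"] by simp
  finally show ?thesis .
qed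

lemma nn_integral_gibbs_coordinate:
  assumes "admissible_potential r \<Psi>" "finite \<Lambda>" "i \<in> \<Lambda>"
    and [measurable]: "\<psi> \<in> borel_measurable borel"
  shows "(\<integral>\<^sup>+h. \<psi> (h i) \<partial>gibbs r \<Psi> \<Lambda> 0)
       = ennreal (1 / partition_fn r \<Psi> \<Lambda> 0) * (\<integral>\<^sup>+s. \<psi> s * gibbs_marginal r \<Psi> \<Lambda> i s \<partial>lborel)"
proof -
  let ?E = "boltzmann_weight r \<Psi> \<Lambda>" and ?Z = "partition_fn r \<Psi> \<Lambda> 0"
  note E = borel_measurable_boltzmann_weight[OF assms(1)] boltzmann_weight_local
  have [measurable]: "?E \<in> borel_measurable (PiM \<Lambda> (\<lambda>_. lborel))"
    by (rule borel_measurable_PiM_local[OF E])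
  have [measurable]: "(\<lambda>h. h i) \<in> borel_measurable (PiM \<Lambda> (\<lambda>_. lborel))" using assms(3) by simp
  have "ennreal (?E h / ?Z) = ennreal (1 / ?Z) * ennreal (?E h)" for h
    by (subst ennreal_mult''[symmetric]) simp_all
  then have "(\<integral>\<^sup>+h. \<psi> (h i) \<partial>gibbs r \<Psi> \<Lambda> 0)
      = (\<integral>\<^sup>+h. ennreal (1 / ?Z) * (\<psi> (h i) * ennreal (?E h)) \<partial>PiM \<Lambda> (\<lambda>_. lborel))"
    unfolding gibbs_def ref_measure_def by (subst nn_integral_density) (auto simp: mult_ac)
  also have "\<dots> = ennreal (1 / ?Z) * (\<integral>\<^sup>+s. \<psi> s * gibbs_marginal r \<Psi> \<Lambda> i s \<partial>lborel)"
    by (simp add: nn_integral_cmult nn_integral_PiM_coordinate[OF assms(2,3) E])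
  finally show ?thesis .
qed

lemma measure_gibbs_coordinate_interval:
  assumes "admissible_potential r \<Psi>" "finite \<Lambda>" "i \<in> \<Lambda>"
  shows "measure (gibbs r \<Psi> \<Lambda> 0) {h \<in> space (gibbs r \<Psi> \<Lambda> 0). \<bar>h i\<bar> \<le> a}
       = enn2real (ennreal (1 / partition_fn r \<Psi> \<Lambda> 0) *
           (\<integral>\<^sup>+s. indicator {-a..a} s * gibbs_marginal r \<Psi> \<Lambda> i s \<partial>lborel))"
proof -
  let ?\<mu> = "gibbs r \<Psi> \<Lambda> 0"
  have [measurable]: "(\<lambda>h. h i) \<in> borel_measurable ?\<mu>"
    using assms(3) by (simp add: gibbs_def ref_measure_def)
  have "{h \<in> space ?\<mu>. \<bar>h i\<bar> \<le> a} \<in> sets ?\<mu>" by measurable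
  then have "emeasure ?\<mu> {h \<in> space ?\<mu>. \<bar>h i\<bar> \<le> a} = (\<integral>\<^sup>+h. indicator {h \<in> space ?\<mu>. \<bar>h i\<bar> \<le> a} h \<partial>?\<mu>)"
    by simp
  also have "\<dots> = (\<integral>\<^sup>+h. indicator {-a..a} (h i) \<partial>?\<mu>)"
    by (rule nn_integral_cong) (auto simp: indicator_def abs_le_iff)
  finally show ?thesis by (simp add: measure_def nn_integral_gibbs_coordinate[OF assms])
qed

lemma integral_gibbs_abs_coordinate:
  assumes "admissible_potential r \<Psi>" "finite \<Lambda>" "i \<in> \<Lambda>"
  shows "(\<integral>h. \<bar>h i\<bar> \<partial>gibbs r \<Psi> \<Lambda> 0)
       = enn2real (ennreal (1 / partition_fn r \<Psi> \<Lambda> 0) *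
           (\<integral>\<^sup>+s. ennreal \<bar>s\<bar> * gibbs_marginal r \<Psi> \<Lambda> i s \<partial>lborel))"
proof -
  have [measurable]: "(\<lambda>h. h i) \<in> borel_measurable (gibbs r \<Psi> \<Lambda> 0)"
    using assms(3) by (simp add: gibbs_def ref_measure_def)
  have "(\<integral>h. \<bar>h i\<bar> \<partial>gibbs r \<Psi> \<Lambda> 0) = enn2real (\<integral>\<^sup>+h. ennreal \<bar>h i\<bar> \<partial>gibbs r \<Psi> \<Lambda> 0)"
    by (rule integral_eq_nn_integral) auto
  then show ?thesis using nn_integral_gibbs_coordinate[OF assms, of "\<lambda>s. ennreal \<bar>s\<bar>"] by simp
qed

theorem lemma6p5:
  fixes r :: nat and \<Psi> :: "site \<Rightarrow> real \<Rightarrow> real" and \<Lambda> :: "site set"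
    and i :: site and a :: real
  assumes "r \<ge> 1" and "admissible_potential r \<Psi>"
    and "a > 0" and "finite \<Lambda>" and "i \<in> \<Lambda>"
  shows "measure (gibbs r \<Psi> \<Lambda> 0) {h \<in> space (gibbs r \<Psi> \<Lambda> 0). \<bar>h i\<bar> \<le> a}
         \<ge> min (a / (4 * (\<integral>h. \<bar>h i\<bar> \<partial>gibbs r \<Psi> \<Lambda> 0))) (1/2)"
proof -
  note adm = assms(2) and fin = assms(4,5)
  note E = borel_measurable_boltzmann_weight[OF adm]
  have "gibbs_marginal r \<Psi> \<Lambda> i s \<le> gibbs_marginal r \<Psi> \<Lambda> i s'" if "\<bar>s'\<bar> \<le> \<bar>s\<bar>" for s s'
    using assms(4) hamiltonian_even[OF adm] that
    by (intro coordinate_marginal_radially_nonincreasing log_concave_boltzmann_weight adm E) auto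
  from symmetric_unimodal_mass_lower_bound[OF borel_measurable_coordinate_marginal[OF _ E] this assms(3)]
  show ?thesis
    using assms(4) by (simp add: measure_gibbs_coordinate_interval[OF adm fin]
        integral_gibbs_abs_coordinate[OF adm fin] partition_fn_eq_gibbs_marginal[OF adm fin])
qed

end
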